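(* Let $\mathbb{X}$ be a two-dimensional real Banach space. Then for any $x \in S_{\mathbb{X}}$ and any $\epsilon \in [0,1)$, there exists a normal cone $K$ in $\mathbb{X}$ such that $F(x,\epsilon) = K \cup (-K)$.
   Context: $S_{\mathbb{X}}=\{x\in\mathbb{X}:\|x\|=1\}$. For $x,y\in\mathbb{X}$ and $\epsilon\in[0,1)$, write $x \perp_D^{\epsilon} y$ if $\|x+\lambda y\| \geq \sqrt{1-\epsilon^2}\,\|x\|$ for all $\lambda\in\mathbb{R}$. Define $F(x,\epsilon)=\{y\in\mathbb{X} : x\perp_D^{\epsilon} y\}$. A subset $K\subseteq\mathbb{X}$ is a normal cone if (i) $K+K\subseteq K$, (ii) $\alpha K\subseteq K$ for all $\alpha\geq 0$, and (iii) $K\cap(-K)=\{0\}$. *)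

theory Defs
  imports "HOL-Analysis.Analysis"
begin

definition approx_bj_orth :: "'a::real_normed_vector \<Rightarrow> real \<Rightarrow> 'a \<Rightarrow> bool" where
  "approx_bj_orth x \<epsilon> y \<longleftrightarrow> (\<forall>t::real. norm (x + t *\<^sub>R y) \<ge> sqrt (1 - \<epsilon>\<^sup>2) * norm x)"

definition F_set :: "'a::real_normed_vector \<Rightarrow> real \<Rightarrow> 'a set" where
  "F_set x \<epsilon> = {y. approx_bj_orth x \<epsilon> y}"

definition normal_cone :: "'a::real_vector set \<Rightarrow> bool" where
  "normal_cone K \<longleftrightarrow>
     (\<forall>u\<in>K. \<forall>v\<in>K. u + v \<in> K) \<and>
     (\<forall>\<alpha>::real. \<forall>u\<in>K. \<alpha> \<ge> 0 \<longrightarrow> \<alpha> *\<^sub>R u \<in> K) \<and>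
     K \<inter> uminus ` K = {0}"

end

theory Submission
  imports Defs
begin

text \<open>Fix a linear functional \<open>f\<close> whose kernel is the line through \<open>x\<close> (in the plane such an
  \<open>f\<close> exists) and let \<open>K\<close> be the part of \<open>F(x,\<epsilon>)\<close> on which \<open>f \<ge> 0\<close>. Since \<open>F(x,\<epsilon>)\<close> is
  symmetric, \<open>F(x,\<epsilon>) = K \<union> -K\<close>, and since \<open>\<epsilon> < 1\<close> the only multiple of \<open>x\<close> in \<open>F(x,\<epsilon>)\<close> is \<open>0\<close>,
  so \<open>K \<inter> -K = {0}\<close>. The heart of the matter is that \<open>K\<close> is closed under addition: for
  \<open>y, z \<in> K\<close> with \<open>f y, f z > 0\<close> we have \<open>z = r y + c x\<close> with \<open>r > 0\<close>, and every point
  \<open>x + t (y + z)\<close> is a dilation by a factor \<open>\<ge> 1\<close> of a point on one of the lines \<open>x + \<real> y\<close>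
  or \<open>x + \<real> z\<close>, which keep distance at least \<open>\<surd>(1 - \<epsilon>\<^sup>2) \<parallel>x\<parallel>\<close> from the origin.\<close>

lemma approx_bj_orth_scaleR:
  "approx_bj_orth x \<epsilon> y \<Longrightarrow> approx_bj_orth x \<epsilon> (c *\<^sub>R y)"
  unfolding approx_bj_orth_def by (metis scaleR_scaleR)

lemma approx_bj_orth_zero: "approx_bj_orth x \<epsilon> 0"
  unfolding approx_bj_orth_def using mult_right_mono[of "sqrt (1 - \<epsilon>\<^sup>2)" 1 "norm x"] by simp

lemma approx_bj_orth_multiple_self:
  assumes "approx_bj_orth x \<epsilon> (c *\<^sub>R x)" and "\<epsilon>\<^sup>2 < 1" and "x \<noteq> 0"
  shows "c = 0"
proof (rule ccontr)
  assume "c \<noteq> 0"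
  then have "x + (- 1 / c) *\<^sub>R (c *\<^sub>R x) = 0"
    by simp
  moreover have "sqrt (1 - \<epsilon>\<^sup>2) * norm x \<le> norm (x + (- 1 / c) *\<^sub>R (c *\<^sub>R x))"
    using assms(1) unfolding approx_bj_orth_def by blast
  moreover have "sqrt (1 - \<epsilon>\<^sup>2) * norm x > 0"
    using assms(2,3) by simp
  ultimately show False
    by simp
qed

lemma approx_bj_orth_dilation_bound:
  assumes "approx_bj_orth x \<epsilon> y" and "0 \<le> c"
  shows "sqrt (1 - \<epsilon>\<^sup>2) * norm x \<le> norm ((1 + c) *\<^sub>R x + s *\<^sub>R y)"
proof -
  have "(1 + c) *\<^sub>R x + s *\<^sub>R y = (1 + c) *\<^sub>R (x + (s / (1 + c)) *\<^sub>R y)"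
    using assms(2) by (simp add: scaleR_add_right)
  then have "norm ((1 + c) *\<^sub>R x + s *\<^sub>R y) = (1 + c) * norm (x + (s / (1 + c)) *\<^sub>R y)"
    using assms(2) by simp
  moreover have "(1 + c) * norm (x + (s / (1 + c)) *\<^sub>R y) \<ge> norm (x + (s / (1 + c)) *\<^sub>R y)"
    using assms(2) by (simp add: mult_le_cancel_right1)
  moreover have "norm (x + (s / (1 + c)) *\<^sub>R y) \<ge> sqrt (1 - \<epsilon>\<^sup>2) * norm x"
    using assms(1) unfolding approx_bj_orth_def by blast
  ultimately show ?thesis
    by linarith
qed

lemma approx_bj_orth_add:
  assumes y: "approx_bj_orth x \<epsilon> y" and z: "approx_bj_orth x \<epsilon> z"
    and decomp: "z = r *\<^sub>R y + c *\<^sub>R x" and "0 < r"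
  shows "approx_bj_orth x \<epsilon> (y + z)"
  unfolding approx_bj_orth_def
proof
  fix t
  show "sqrt (1 - \<epsilon>\<^sup>2) * norm x \<le> norm (x + t *\<^sub>R (y + z))"
  proof (cases "0 \<le> t * c")
    case True
    have "x + t *\<^sub>R (y + z) = (1 + t * c) *\<^sub>R x + (t * (1 + r)) *\<^sub>R y"
      unfolding decomp by (simp add: algebra_simps)
    then show ?thesis
      using approx_bj_orth_dilation_bound[OF y True] by simp
  next
    case False
    then have "t * c / r \<le> 0"
      using \<open>0 < r\<close> by (simp add: divide_nonpos_pos)
    then have nonneg: "0 \<le> t * (- c / r)"
      by simp
    have "x + t *\<^sub>R (y + z) = (1 + t * (- c / r)) *\<^sub>R x + (t * (1 + 1 / r)) *\<^sub>R z"
      unfolding decomp using \<open>0 < r\<close> by (simp add: algebra_simps)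
    then show ?thesis
      using approx_bj_orth_dilation_bound[OF z nonneg] by presburger
  qed
qed

lemma F_set_eq_halfspace_union_neg:
  fixes f :: "'a::real_normed_vector \<Rightarrow> real"
  assumes "linear f"
  shows "F_set x \<epsilon> = {y \<in> F_set x \<epsilon>. 0 \<le> f y} \<union> uminus ` {y \<in> F_set x \<epsilon>. 0 \<le> f y}"
proof -
  have neg: "- y \<in> F_set x \<epsilon>" if "y \<in> F_set x \<epsilon>" for y
    using that approx_bj_orth_scaleR[of x \<epsilon> y "-1"] by (simp add: F_set_def)
  have "y \<in> uminus ` {y \<in> F_set x \<epsilon>. 0 \<le> f y}" if "y \<in> F_set x \<epsilon>" "f y < 0" for y
  proof (rule image_eqI)
    show "- y \<in> {y \<in> F_set x \<epsilon>. 0 \<le> f y}"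
      using that neg linear_neg[OF assms, of y] by simp
  qed simp
  then show ?thesis
    using neg by force
qed

lemma normal_cone_F_set_halfspace:
  fixes f :: "'a::real_normed_vector \<Rightarrow> real"
  assumes f: "linear f" and ker: "\<And>y. f y = 0 \<Longrightarrow> y \<in> span {x}"
    and "x \<noteq> 0" and "\<epsilon>\<^sup>2 < 1"
  shows "normal_cone {y \<in> F_set x \<epsilon>. 0 \<le> f y}"
proof -
  let ?K = "{y \<in> F_set x \<epsilon>. 0 \<le> f y}"
  have ker_F: "y = 0" if y: "y \<in> F_set x \<epsilon>" and fy: "f y = 0" for y
  proof -
    obtain c where "y = c *\<^sub>R x"
      using ker[OF fy] by (auto simp: span_singleton)
    then show ?thesis
      using y approx_bj_orth_multiple_self[of x \<epsilon> c] assms(3,4) by (simp add: F_set_def)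
  qed
  have add: "y + z \<in> ?K" if "y \<in> ?K" "z \<in> ?K" for y z
  proof (cases "f y = 0 \<or> f z = 0")
    case True
    then have "y = 0 \<or> z = 0"
      using that ker_F by auto
    then show ?thesis
      using that by auto
  next
    case False
    with that have "0 < f y" "0 < f z"
      by auto
    define r where "r = f z / f y"
    have "f (z - r *\<^sub>R y) = 0"
      using \<open>0 < f y\<close> by (simp add: r_def linear_diff[OF f] linear_scale[OF f])
    then obtain c where "z - r *\<^sub>R y = c *\<^sub>R x"
      using ker by (auto simp: span_singleton)
    then have "z = r *\<^sub>R y + c *\<^sub>R x"
      by (simp add: algebra_simps)
    moreover have "0 < r"
      using \<open>0 < f y\<close> \<open>0 < f z\<close> by (simp add: r_def)
    ultimately have "y + z \<in> F_set x \<epsilon>"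
      using that approx_bj_orth_add[of x \<epsilon> y z] by (simp add: F_set_def)
    then show ?thesis
      using that by (simp add: linear_add[OF f])
  qed
  have scale: "\<alpha> *\<^sub>R y \<in> ?K" if "y \<in> ?K" "0 \<le> \<alpha>" for y \<alpha>
    using that approx_bj_orth_scaleR by (auto simp: F_set_def linear_scale[OF f])
  have "?K \<inter> uminus ` ?K \<subseteq> {0}"
    using ker_F by (force simp: linear_neg[OF f])
  moreover have "0 \<in> ?K \<inter> uminus ` ?K"
    using approx_bj_orth_zero linear_0[OF f] by (force simp: F_set_def)
  ultimately show ?thesis
    unfolding normal_cone_def using add scale by blast
qed

lemma dim_two_kernel_functional:
  fixes x :: "'a::real_vector"
  assumes "dim (UNIV :: 'a set) = 2" and "x \<noteq> 0"
  obtains f :: "'a \<Rightarrow> real" where "linear f" and "\<And>y. f y = 0 \<Longrightarrow> y \<in> span {x}"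
proof -
  have "independent {x}"
    using assms(2) by simp
  then obtain B where "x \<in> B" and indep: "independent B" and spans: "span B = UNIV"
    using maximal_independent_subset_extend[of "{x}" UNIV] by (metis insert_subset span_UNIV
        subset_UNIV top.extremum_uniqueI span_superset)
  have "card B = 2"
    using dim_eq_card[of B UNIV] indep spans assms(1) by simp
  then obtain w where B: "B = {x, w}" and "w \<noteq> x"
    using \<open>x \<in> B\<close> by (metis card_2_iff doubleton_eq_iff insertE singletonD)
  define f where "f y = representation B y w" for y
  have "linear f"
    unfolding f_def using indep spans
    by (intro linearI) (simp_all add: representation_add representation_scale)
  moreover have "y \<in> span {x}" if "f y = 0" for y
  proof -
    have "y = (\<Sum>b\<in>B. representation B y b *\<^sub>R b)"
      using sum_representation_eq[of B y B] indep spans B by simp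
    also have "\<dots> = representation B y x *\<^sub>R x"
      using that \<open>w \<noteq> x\<close> by (simp add: B f_def)
    finally show ?thesis
      by (metis span_base span_scale singletonI)
  qed
  ultimately show ?thesis
    using that by blast
qed

theorem theorem2p1:
  fixes x :: "'a::banach" and \<epsilon> :: real
  assumes "dim (UNIV :: 'a set) = 2"
    and "norm x = 1"
    and "0 \<le> \<epsilon>" and "\<epsilon> < 1"
  shows "\<exists>K. normal_cone K \<and> F_set x \<epsilon> = K \<union> uminus ` K"
proof -
  have "x \<noteq> 0"
    using assms(2) by auto
  moreover have "\<epsilon>\<^sup>2 < 1"
    using assms(3,4) by (simp add: power_less_one_iff abs_square_less_1)
  moreover obtain f :: "'a \<Rightarrow> real" where "linear f" and "\<And>y. f y = 0 \<Longrightarrow> y \<in> span {x}"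
    using dim_two_kernel_functional[OF assms(1) \<open>x \<noteq> 0\<close>] by blast
  ultimately show ?thesis
    using normal_cone_F_set_halfspace F_set_eq_halfspace_union_neg by blast
qed

end
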